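(* Let $q=1-p=o\!\left(\frac{1}{n^{1.5}}\right)$. Then for all sufficiently large $n\in\mathbb{N}$ we have $u_3(n,p)=u_3'(n,p)=4$.
   Context: $G(n,p)$ is the Erdős–Rényi random graph on $n$ labelled vertices (vertex set $V$), each edge present independently with probability $p=p(n)$; $\mathbb{P}_{n,p}$ is the corresponding probability and $q=1-p$. A diameter graph in $\mathbb{R}^d$ is a graph $(V,E)$ with $V\subset\mathbb{R}^d$ finite and $E=\{\{\mathbf{x},\mathbf{y}\}\subseteq V: |\mathbf{x}-\mathbf{y}|=\operatorname{diam}V\}$, where $\operatorname{diam}V=\max_{\mathbf{x},\mathbf{y}\in V}|\mathbf{x}-\mathbf{y}|$ (Euclidean norm); a graph is a diameter graph in $\mathbb{R}^d$ if it is isomorphic to one. $u_d(n,p)$ is the largest positive integer $k$ such that $\mathbb{P}_{n,p}\big(\exists W\subseteq V,\ |W|=k,\ G[W]$ is a diameter graph in $\mathbb{R}^d$ and $\chi(G[W])=d+1\big)>\frac12$, where $G[W]$ is the induced subgraph; if no such $k$ exists, $u_d(n,p)=0$. $u_d'(n,p)$ is defined identically with the additional requirement that $G[W]$ be connected. *)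

theory Defs
  imports "HOL-Analysis.Analysis" "HOL-Library.Landau_Symbols"
begin

text \<open>Graphs on the vertex set V = {0..<n}: an edge set is a set of 2-element subsets.\<close>

definition all_edges :: "nat \<Rightarrow> nat set set" where
  "all_edges n = {e. \<exists>x y. x \<noteq> y \<and> x < n \<and> y < n \<and> e = {x, y}}"

definition prob_Gnp :: "nat \<Rightarrow> real \<Rightarrow> (nat set set \<Rightarrow> bool) \<Rightarrow> real" where
  "prob_Gnp n p Q =
     (\<Sum>E\<in>Pow (all_edges n).
        if Q E then p ^ card E * (1 - p) ^ (card (all_edges n) - card E) else 0)"

text \<open>The induced subgraph G[W] (vertex set W, edge set = edges of E inside W)
  is a diameter graph in the Euclidean space 'a: it is isomorphic to the diameter
  graph of some finite point set, i.e. there is an injective placement f of W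
  such that two distinct vertices are adjacent iff their images are at distance
  diam (f ` W).\<close>
definition is_diameter_graph ::
    "('a::euclidean_space) itself \<Rightarrow> nat set \<Rightarrow> nat set set \<Rightarrow> bool" where
  "is_diameter_graph T W E \<longleftrightarrow>
     (\<exists>f :: nat \<Rightarrow> 'a. inj_on f W \<and>
        (\<forall>x\<in>W. \<forall>y\<in>W. x \<noteq> y \<longrightarrow>
            ({x, y} \<in> E \<longleftrightarrow> dist (f x) (f y) = diameter (f ` W))))"

definition chromatic_number :: "nat set \<Rightarrow> nat set set \<Rightarrow> nat" where
  "chromatic_number W E =
     (LEAST k. \<exists>c :: nat \<Rightarrow> nat. (\<forall>x\<in>W. c x < k) \<and>
        (\<forall>x\<in>W. \<forall>y\<in>W. x \<noteq> y \<and> {x, y} \<in> E \<longrightarrow> c x \<noteq> c y))"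

definition connected_induced :: "nat set \<Rightarrow> nat set set \<Rightarrow> bool" where
  "connected_induced W E \<longleftrightarrow>
     (\<forall>x\<in>W. \<forall>y\<in>W.
        (x, y) \<in> ({(a, b). a \<in> W \<and> b \<in> W \<and> a \<noteq> b \<and> {a, b} \<in> E})\<^sup>*)"

definition diam_event ::
    "('a::euclidean_space) itself \<Rightarrow> bool \<Rightarrow> nat \<Rightarrow> nat \<Rightarrow> nat set set \<Rightarrow> bool" where
  "diam_event T conn n k E \<longleftrightarrow>
     (\<exists>W. W \<subseteq> {0..<n} \<and> card W = k \<and> is_diameter_graph T W E \<and>
          chromatic_number W E = DIM('a) + 1 \<and> (conn \<longrightarrow> connected_induced W E))"

text \<open>u_d(n,p) (conn = False) and u_d'(n,p) (conn = True): the largest positive k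
  with probability > 1/2, or 0 if none. (Such k are at most n.)\<close>
definition u_gen :: "('a::euclidean_space) itself \<Rightarrow> bool \<Rightarrow> nat \<Rightarrow> real \<Rightarrow> nat" where
  "u_gen T conn n p = Max ({k. 0 < k \<and> prob_Gnp n p (diam_event T conn n k) > 1/2} \<union> {0})"

definition u_d :: "('a::euclidean_space) itself \<Rightarrow> nat \<Rightarrow> real \<Rightarrow> nat" where
  "u_d T n p = u_gen T False n p"

definition u_d' :: "('a::euclidean_space) itself \<Rightarrow> nat \<Rightarrow> real \<Rightarrow> nat" where
  "u_d' T n p = u_gen T True n p"

end

theory Submission
  imports Defs
begin

text \<open>If \<open>q = o(n\<^sup>-\<^sup>3\<^sup>/\<^sup>2)\<close>, then with high probability the vertices \<open>0, 1, 2, 3\<close> span a \<open>K\<^sub>4\<close>, which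
  is realised by a regular tetrahedron, and no vertex has two non-neighbours: the expected number
  of such configurations is at most \<open>n\<^sup>3 q\<^sup>2\<close>. In a graph where every vertex has at most one
  non-neighbour, non-adjacency is an equivalence relation whose classes are independent, so
  chromatic number 4 forces a \<open>K\<^sub>4\<close>; on five or more vertices it extends to a \<open>K\<^sub>5\<close> minus an edge.
  That is no diameter graph in \<open>\<real>\<^sup>3\<close>: the two points at distance \<open>D\<close> from all vertices of an
  equilateral triangle of side \<open>D\<close> are the apexes of the two regular tetrahedra over it, and
  these are further than \<open>D\<close> apart.\<close>

lemma cross3_normal_parallel:
  fixes u v w :: "real^3"
  assumes "w \<bullet> u = 0" "w \<bullet> v = 0"
  shows "(cross3 u v \<bullet> cross3 u v) *\<^sub>R w = (cross3 u v \<bullet> w) *\<^sub>R cross3 u v"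
proof -
  let ?n = "cross3 u v"
  have "cross3 w ?n = 0" using assms by (simp add: Lagrange inner_commute)
  moreover have "cross3 ?n (cross3 w ?n) = (?n \<bullet> ?n) *\<^sub>R w - (?n \<bullet> w) *\<^sub>R ?n"
    by (rule Lagrange)
  ultimately show ?thesis by simp
qed

lemma orthogonal_normals_of_plane:
  fixes u v w r :: "real^3"
  assumes uv: "cross3 u v \<noteq> 0"
    and "w \<bullet> u = 0" "w \<bullet> v = 0" "r \<bullet> u = 0" "r \<bullet> v = 0" and wr: "w \<bullet> r = 0"
  shows "w = 0 \<or> r = 0"
proof -
  let ?n = "cross3 u v"
  have w: "(?n \<bullet> ?n) *\<^sub>R w = (?n \<bullet> w) *\<^sub>R ?n" and r: "(?n \<bullet> ?n) *\<^sub>R r = (?n \<bullet> r) *\<^sub>R ?n"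
    using assms by (simp_all add: cross3_normal_parallel)
  have "((?n \<bullet> ?n) *\<^sub>R w) \<bullet> ((?n \<bullet> ?n) *\<^sub>R r) = 0" using wr by simp
  then have "(?n \<bullet> w) * (?n \<bullet> r) * (?n \<bullet> ?n) = 0" unfolding w r by (simp add: algebra_simps)
  then have "?n \<bullet> w = 0 \<or> ?n \<bullet> r = 0" using uv by auto
  then show ?thesis using w r uv by auto
qed

lemma inner_of_equal_dists:
  fixes a b c :: "'a::real_inner"
  assumes "dist a b = D" "dist a c = D" "dist b c = D"
  shows "(b - a) \<bullet> (c - a) = D\<^sup>2 / 2"
proof -
  have sq: "(x - y) \<bullet> (x - y) = D\<^sup>2" if "dist x y = D" for x y :: 'a
    using that by (simp add: dist_norm flip: power2_norm_eq_inner)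
  have "(b - c) \<bullet> (b - c) = (b - a) \<bullet> (b - a) + (c - a) \<bullet> (c - a) - 2 * ((b - a) \<bullet> (c - a))"
    by (simp add: inner_commute algebra_simps)
  moreover have "(b - a) \<bullet> (b - a) = D\<^sup>2"
    using sq[of b a] assms(1) by (simp add: dist_commute)
  ultimately show ?thesis
    using sq[of b c] sq[of c a] assms by (simp add: dist_commute)
qed

lemma apexes_over_equilateral_triangle:
  fixes A B C X Y :: "real^3"
  assumes D: "D > 0"
    and ABC: "dist A B = D" "dist A C = D" "dist B C = D"
    and X: "dist A X = D" "dist B X = D" "dist C X = D"
    and Y: "dist A Y = D" "dist B Y = D" "dist C Y = D"
    and "X \<noteq> Y"
  shows "D < dist X Y"
proof (rule ccontr)
  assume "\<not> D < dist X Y"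
  then have close: "norm ((X - A) - (Y - A)) \<le> D" by (simp add: dist_norm)
  define u v x y where "u = B - A" and "v = C - A" and "x = X - A" and "y = Y - A"
  have sq: "(P - Q) \<bullet> (P - Q) = D\<^sup>2" if "dist Q P = D" for P Q :: "real^3"
    using that by (simp add: dist_norm norm_minus_commute flip: power2_norm_eq_inner)
  have norms: "u \<bullet> u = D\<^sup>2" "v \<bullet> v = D\<^sup>2" "x \<bullet> x = D\<^sup>2" "y \<bullet> y = D\<^sup>2"
    using sq ABC X Y by (auto simp: u_def v_def x_def y_def)
  have inners: "u \<bullet> v = D\<^sup>2/2" "u \<bullet> x = D\<^sup>2/2" "v \<bullet> x = D\<^sup>2/2" "u \<bullet> y = D\<^sup>2/2" "v \<bullet> y = D\<^sup>2/2"
    using inner_of_equal_dists ABC X Y unfolding u_def v_def x_def y_def by blast+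
  have "(x - y) \<bullet> (x - y) \<le> D\<^sup>2"
    using close D unfolding x_def y_def by (simp add: power_mono flip: power2_norm_eq_inner)
  then have xy: "D\<^sup>2/2 \<le> x \<bullet> y" using norms by (simp add: inner_diff inner_commute)
  have "cross3 u v \<bullet> cross3 u v = 3/4 * D\<^sup>2 * D\<^sup>2"
    by (simp add: dot_cross inner_commute[of v u] norms inners power2_eq_square)
  then have normal: "cross3 u v \<noteq> 0" using D by auto
  \<comment> \<open>Both \<open>w\<close> and \<open>r\<close> are normal to the plane of the triangle, and \<open>w \<bullet> r = x \<bullet> x - y \<bullet> y = 0\<close>.\<close>
  define w r where "w = x - y" and "r = x + y - (2/3) *\<^sub>R (u + v)"
  have "r \<bullet> r = 2 * (x \<bullet> y) + 2/3 * D\<^sup>2"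
    using norms inners by (simp add: r_def inner_commute algebra_simps)
  moreover have "0 < D\<^sup>2" using D by simp
  ultimately have "0 < r \<bullet> r" using xy by linarith
  then have "r \<noteq> 0" by auto
  moreover have "w \<noteq> 0" using \<open>X \<noteq> Y\<close> by (simp add: w_def x_def y_def)
  moreover have "w = 0 \<or> r = 0"
    by (rule orthogonal_normals_of_plane[OF normal])
      (use norms inners in \<open>simp_all add: w_def r_def inner_commute algebra_simps\<close>)
  ultimately show False by blast
qed


lemma chromatic_number_le:
  assumes "\<forall>x\<in>W. c x < k" and "\<forall>x\<in>W. \<forall>y\<in>W. x \<noteq> y \<and> {x, y} \<in> E \<longrightarrow> c x \<noteq> c y"
  shows "chromatic_number W E \<le> k"
  unfolding chromatic_number_def by (rule Least_le) (use assms in blast)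

lemma chromatic_number_le_card_quotient:
  assumes "finite W" and R: "equiv W R" and indep: "\<And>x y. (x, y) \<in> R \<Longrightarrow> x = y \<or> {x, y} \<notin> E"
  shows "chromatic_number W E \<le> card (W // R)"
proof -
  have "finite (W // R)" using finite_quotient[OF \<open>finite W\<close> equiv_type[OF R]] .
  then obtain g where g: "bij_betw g (W // R) {0..<card (W // R)}"
    using ex_bij_betw_finite_nat by blast
  have "g (R `` {x}) < card (W // R)" if "x \<in> W" for x
    using bij_betw_apply[OF g quotientI[OF that]] by simp
  moreover have "g (R `` {x}) \<noteq> g (R `` {y})" if xy: "x \<in> W" "y \<in> W" "x \<noteq> y \<and> {x, y} \<in> E" for x y
  proof -
    have "(x, y) \<notin> R" using indep xy(3) by auto
    then have "R `` {x} \<noteq> R `` {y}" using equiv_class_eq_iff[OF R, of x y] xy by simp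
    then show ?thesis
      using inj_on_contraD[OF bij_betw_imp_inj_on[OF g]] quotientI xy(1,2) by metis
  qed
  ultimately show ?thesis by (intro chromatic_number_le) auto
qed

lemma chromatic_number_complete:
  assumes "finite W" and complete: "\<And>x y. x \<in> W \<Longrightarrow> y \<in> W \<Longrightarrow> x \<noteq> y \<Longrightarrow> {x, y} \<in> E"
  shows "chromatic_number W E = card W"
  unfolding chromatic_number_def
proof (rule Least_equality)
  obtain g where g: "bij_betw g W {0..<card W}"
    using ex_bij_betw_finite_nat[OF \<open>finite W\<close>] by blast
  show "\<exists>c. (\<forall>x\<in>W. c x < card W) \<and> (\<forall>x\<in>W. \<forall>y\<in>W. x \<noteq> y \<and> {x, y} \<in> E \<longrightarrow> c x \<noteq> c y)"
    using bij_betw_apply[OF g] inj_on_contraD[OF bij_betw_imp_inj_on[OF g]]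
    by (intro exI[of _ g]) auto
next
  fix k :: nat
  assume "\<exists>c. (\<forall>x\<in>W. c x < k) \<and> (\<forall>x\<in>W. \<forall>y\<in>W. x \<noteq> y \<and> {x, y} \<in> E \<longrightarrow> c x \<noteq> c y)"
  then obtain c where range: "c ` W \<subseteq> {..<k}"
    and proper: "\<And>x y. x \<in> W \<Longrightarrow> y \<in> W \<Longrightarrow> x \<noteq> y \<Longrightarrow> {x, y} \<in> E \<Longrightarrow> c x \<noteq> c y"
    by blast
  have "inj_on c W" by (rule inj_onI) (use proper complete in blast)
  then show "card W \<le> k" using card_inj_on_le[OF _ range] by simp
qed

lemma connected_induced_complete:
  assumes "\<And>x y. x \<in> W \<Longrightarrow> y \<in> W \<Longrightarrow> x \<noteq> y \<Longrightarrow> {x, y} \<in> E"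
  shows "connected_induced W E"
  unfolding connected_induced_def
proof (intro ballI)
  fix x y assume "x \<in> W" "y \<in> W"
  then show "(x, y) \<in> {(a, b). a \<in> W \<and> b \<in> W \<and> a \<noteq> b \<and> {a, b} \<in> E}\<^sup>*"
    using assms by (cases "x = y") auto
qed

definition at_most_one_non_neighbour :: "nat set \<Rightarrow> nat set set \<Rightarrow> bool" where
  "at_most_one_non_neighbour W E \<longleftrightarrow>
     (\<forall>v\<in>W. \<forall>x\<in>W. \<forall>y\<in>W. v \<noteq> x \<and> v \<noteq> y \<and> {v, x} \<notin> E \<and> {v, y} \<notin> E \<longrightarrow> x = y)"

lemma at_most_one_non_neighbour_subset:
  "at_most_one_non_neighbour V E \<Longrightarrow> W \<subseteq> V \<Longrightarrow> at_most_one_non_neighbour W E"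
  unfolding at_most_one_non_neighbour_def by blast

lemma equiv_non_adjacency:
  assumes amn: "at_most_one_non_neighbour W E"
  shows "equiv W {(x, y). x \<in> W \<and> y \<in> W \<and> (x = y \<or> {x, y} \<notin> E)}" (is "equiv W ?R")
proof (rule equivI)
  show "trans ?R"
  proof (rule transI)
    fix x y z assume "(x, y) \<in> ?R" "(y, z) \<in> ?R"
    then have W: "x \<in> W" "y \<in> W" "z \<in> W" and xy: "x = y \<or> {y, x} \<notin> E" and yz: "y = z \<or> {y, z} \<notin> E"
      by (auto simp: insert_commute)
    have "x = z \<or> {x, z} \<notin> E"
    proof (cases "x = y \<or> y = z")
      case True
      then show ?thesis using xy yz by (auto simp: insert_commute)
    next
      case False
      then show ?thesis
        using amn[unfolded at_most_one_non_neighbour_def, rule_format, of y x z] W xy yz by blast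
    qed
    then show "(x, z) \<in> ?R" using W by simp
  qed
qed (auto simp: refl_on_def sym_def insert_commute)

lemma at_most_one_non_neighbour_obtain_clique:
  assumes "finite W" and amn: "at_most_one_non_neighbour W E" and chi: "k \<le> chromatic_number W E"
  obtains K where "K \<subseteq> W" "card K = k" "\<And>x y. x \<in> K \<Longrightarrow> y \<in> K \<Longrightarrow> x \<noteq> y \<Longrightarrow> {x, y} \<in> E"
proof -
  define R where "R = {(x, y). x \<in> W \<and> y \<in> W \<and> (x = y \<or> {x, y} \<notin> E)}"
  have R: "equiv W R" unfolding R_def by (rule equiv_non_adjacency[OF amn])
  have "chromatic_number W E \<le> card (W // R)"
    by (rule chromatic_number_le_card_quotient[OF \<open>finite W\<close> R]) (simp add: R_def)
  then obtain S where S: "S \<subseteq> W // R" "card S = k"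
    using chi obtain_subset_with_card_n[of k "W // R"] by auto
  define rep where "rep C = (SOME x. x \<in> C)" for C :: "nat set"
  have rep: "rep C \<in> C" if "C \<in> S" for C
    unfolding rep_def using in_quotient_imp_non_empty[OF R] S(1) that by (simp add: some_in_eq subset_iff)
  have inW: "rep C \<in> W" if "C \<in> S" for C
    using rep in_quotient_imp_subset[OF R] S(1) that by blast
  have apart: "(rep C, rep C') \<notin> R" if "C \<in> S" "C' \<in> S" "C \<noteq> C'" for C C'
    using quotient_eqI[OF R, of C C' "rep C" "rep C'"] rep S(1) that by blast
  show thesis
  proof
    show "rep ` S \<subseteq> W" using inW by blast
    have "inj_on rep S"
    proof (rule inj_onI)
      fix C C' assume "C \<in> S" "C' \<in> S" "rep C = rep C'"
      then show "C = C'" using apart[of C C'] inW[of C] by (auto simp: R_def)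
    qed
    then show "card (rep ` S) = k" using S(2) by (simp add: card_image)
  next
    fix x y assume "x \<in> rep ` S" "y \<in> rep ` S" "x \<noteq> y"
    then obtain C C' where "C \<in> S" "C' \<in> S" "x = rep C" "y = rep C'" by blast
    then show "{x, y} \<in> E" using apart[of C C'] inW \<open>x \<noteq> y\<close> by (auto simp: R_def)
  qed
qed

lemma at_most_one_non_neighbour_obtain_K5_minus_edge:
  assumes amn: "at_most_one_non_neighbour W E" and K: "K \<subseteq> W" "card K = 4"
    and clique: "\<And>x y. x \<in> K \<Longrightarrow> y \<in> K \<Longrightarrow> x \<noteq> y \<Longrightarrow> {x, y} \<in> E"
    and e: "e \<in> W" "e \<notin> K"
  obtains a b c d where "K = {a, b, c, d}" "distinct [a, b, c, d, e]"
    "{a, b} \<in> E" "{a, c} \<in> E" "{b, c} \<in> E"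
    "\<And>z. z \<in> {d, e} \<Longrightarrow> {a, z} \<in> E \<and> {b, z} \<in> E \<and> {c, z} \<in> E"
proof -
  have "\<exists>d\<in>K. \<forall>x\<in>K - {d}. {x, e} \<in> E"
  proof (cases "\<exists>d\<in>K. {d, e} \<notin> E")
    case True
    then obtain d where d: "d \<in> K" "{e, d} \<notin> E" by (auto simp: insert_commute)
    have "{x, e} \<in> E" if x: "x \<in> K - {d}" for x
    proof (rule ccontr)
      assume "{x, e} \<notin> E"
      then have "{e, x} \<notin> E" by (simp add: insert_commute)
      moreover have "e \<noteq> x" "e \<noteq> d" "x \<in> W" "d \<in> W" using x d e K(1) by auto
      ultimately have "x = d"
        using amn e(1) d(2) unfolding at_most_one_non_neighbour_def by blast
      with x show False by simp
    qed
    then show ?thesis using d(1) by blast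
  next
    case False
    moreover have "K \<noteq> {}" using K(2) by auto
    ultimately show ?thesis by blast
  qed
  then obtain d where d: "d \<in> K" and de: "\<And>x. x \<in> K - {d} \<Longrightarrow> {x, e} \<in> E" by blast
  have "card (K - {d}) = 3" using K(2) d by simp
  then obtain a b c where abc: "K - {d} = {a, b, c}" "a \<noteq> b" "a \<noteq> c" "b \<noteq> c"
    by (auto simp: card_3_iff)
  have K_eq: "K = {a, b, c, d}" using abc(1) d by blast
  have "a \<in> K - {d}" "b \<in> K - {d}" "c \<in> K - {d}" using abc(1) by auto
  then have abcd: "a \<in> K" "b \<in> K" "c \<in> K" "a \<noteq> d" "b \<noteq> d" "c \<noteq> d"
    and ae: "{a, e} \<in> E" "{b, e} \<in> E" "{c, e} \<in> E" using de by auto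
  show thesis
  proof
    show "K = {a, b, c, d}" by (fact K_eq)
    show "distinct [a, b, c, d, e]" using abc(2-4) abcd d e(2) by auto
    show "{a, b} \<in> E" "{a, c} \<in> E" "{b, c} \<in> E" using clique abc(2-4) abcd by auto
    fix z assume "z \<in> {d, e}"
    then show "{a, z} \<in> E \<and> {b, z} \<in> E \<and> {c, z} \<in> E"
      using clique[OF _ d] abcd ae by auto
  qed
qed

lemma diameter_graph_3_no_K5_minus_edge:
  assumes dg: "is_diameter_graph TYPE(real^3) W E" and "finite W"
    and W: "{a, b, c, d, e} \<subseteq> W" and distinct: "distinct [a, b, c, d, e]"
    and triangle: "{a, b} \<in> E" "{a, c} \<in> E" "{b, c} \<in> E"
    and apexes: "\<And>z. z \<in> {d, e} \<Longrightarrow> {a, z} \<in> E \<and> {b, z} \<in> E \<and> {c, z} \<in> E"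
  shows False
proof -
  obtain f :: "nat \<Rightarrow> real^3" where inj: "inj_on f W" and
    adj: "\<And>x y. x \<in> W \<Longrightarrow> y \<in> W \<Longrightarrow> x \<noteq> y \<Longrightarrow> {x, y} \<in> E \<longleftrightarrow> dist (f x) (f y) = diameter (f ` W)"
    using dg unfolding is_diameter_graph_def by blast
  define D where "D = diameter (f ` W)"
  have far: "dist (f x) (f y) \<le> D" if "x \<in> W" "y \<in> W" for x y
    unfolding D_def using that \<open>finite W\<close> by (intro diameter_bounded_bound) auto
  have D: "dist (f x) (f y) = D" if "{x, y} \<subseteq> W" "x \<noteq> y" "{x, y} \<in> E" for x y
    using adj that unfolding D_def by blast
  have "f a \<noteq> f b" using inj W distinct by (auto dest: inj_onD)
  moreover have "dist (f a) (f b) = D" using D[of a b] W distinct triangle by auto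
  ultimately have "0 < D" by auto
  have to_apex: "dist (f x) (f z) = D" if "x \<in> {a, b, c}" "z \<in> {d, e}" for x z
    using D[of x z] apexes[OF that(2)] that W distinct by auto
  have "f d \<noteq> f e" using inj W distinct by (auto dest: inj_onD)
  moreover have "dist (f a) (f b) = D" "dist (f a) (f c) = D" "dist (f b) (f c) = D"
    using D W distinct triangle by auto
  ultimately have "D < dist (f d) (f e)"
    using apexes_over_equilateral_triangle[OF \<open>0 < D\<close>, of "f a" "f b" "f c" "f d" "f e"] to_apex
    by simp
  with far[of d e] W show False by simp
qed

lemma diameter_graph_3_two_non_neighbours:
  assumes dg: "is_diameter_graph TYPE(real^3) W E" and "finite W" and "5 \<le> card W"
    and chi: "chromatic_number W E = 4"
  shows "\<not> at_most_one_non_neighbour W E"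
proof
  assume amn: "at_most_one_non_neighbour W E"
  obtain K where K: "K \<subseteq> W" "card K = 4"
    and clique: "\<And>x y. x \<in> K \<Longrightarrow> y \<in> K \<Longrightarrow> x \<noteq> y \<Longrightarrow> {x, y} \<in> E"
    using at_most_one_non_neighbour_obtain_clique[OF \<open>finite W\<close> amn] chi by auto
  have "K \<noteq> W" using K(2) \<open>5 \<le> card W\<close> by auto
  then obtain e where e: "e \<in> W" "e \<notin> K" using K(1) by blast
  obtain a b c d where "K = {a, b, c, d}" "distinct [a, b, c, d, e]"
    "{a, b} \<in> E" "{a, c} \<in> E" "{b, c} \<in> E"
    "\<And>z. z \<in> {d, e} \<Longrightarrow> {a, z} \<in> E \<and> {b, z} \<in> E \<and> {c, z} \<in> E"
    using at_most_one_non_neighbour_obtain_K5_minus_edge[OF amn K clique e] by blast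
  then show False
    using diameter_graph_3_no_K5_minus_edge[OF dg \<open>finite W\<close>, of a b c d e] K e by blast
qed

lemma finite_all_edges: "finite (all_edges n)"
  by (rule finite_subset[of _ "Pow {0..<n}"]) (auto simp: all_edges_def)

lemma all_edges_mono: "m \<le> n \<Longrightarrow> all_edges m \<subseteq> all_edges n"
  unfolding all_edges_def by fastforce

lemma sum_Pow_binomial_weights:
  fixes p :: real
  assumes "finite B"
  shows "(\<Sum>E\<in>Pow B. p ^ card E * (1 - p) ^ (card B - card E)) = 1"
proof -
  have "(\<Sum>E\<in>Pow B. p ^ card E * (1 - p) ^ (card B - card E))
      = (\<Sum>E\<in>Pow B. (\<Prod>x\<in>E. p) * (\<Prod>x\<in>B - E. 1 - p))"
    using assms by (intro sum.cong) (auto simp: card_Diff_subset finite_subset)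
  also have "\<dots> = (\<Prod>x\<in>B. p + (1 - p))"
    by (rule prod_add[OF assms, symmetric])
  finally show ?thesis by simp
qed

lemma prob_Gnp_no_edge_of:
  assumes "S \<subseteq> all_edges n"
  shows "prob_Gnp n p (\<lambda>E. S \<inter> E = {}) = (1 - p) ^ card S"
proof -
  let ?A = "all_edges n"
  have fin: "finite ?A" "finite S" using assms finite_all_edges finite_subset by blast+
  have card_A: "card ?A = card S + card (?A - S)"
    using assms fin by (simp add: card_Diff_subset card_mono)
  have "prob_Gnp n p (\<lambda>E. S \<inter> E = {})
      = (\<Sum>E\<in>Pow (?A - S). p ^ card E * (1 - p) ^ (card ?A - card E))"
    unfolding prob_Gnp_def using fin(1)
    by (subst sum.inter_filter[symmetric]) (auto intro!: sum.cong)
  also have "\<dots> = (\<Sum>E\<in>Pow (?A - S). (1 - p) ^ card S * (p ^ card E * (1 - p) ^ (card (?A - S) - card E)))"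
  proof (rule sum.cong)
    fix E assume "E \<in> Pow (?A - S)"
    then have "card E \<le> card (?A - S)" using fin(1) by (simp add: card_mono)
    then have "card ?A - card E = card S + (card (?A - S) - card E)" using card_A by linarith
    then show "p ^ card E * (1 - p) ^ (card ?A - card E)
        = (1 - p) ^ card S * (p ^ card E * (1 - p) ^ (card (?A - S) - card E))"
      by (simp add: power_add)
  qed simp
  also have "\<dots> = (1 - p) ^ card S"
    using sum_Pow_binomial_weights[of "?A - S" p] fin(1) by (simp flip: sum_distrib_left)
  finally show ?thesis .
qed

lemma prob_Gnp_compl: "prob_Gnp n p (\<lambda>E. \<not> Q E) = 1 - prob_Gnp n p Q"
proof -
  have "prob_Gnp n p Q + prob_Gnp n p (\<lambda>E. \<not> Q E) = prob_Gnp n p (\<lambda>E. {} \<inter> E = {})"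
    unfolding prob_Gnp_def by (simp flip: sum.distrib) (rule sum.cong, auto)
  also have "\<dots> = 1" using prob_Gnp_no_edge_of[of "{}" n p] by simp
  finally show ?thesis by simp
qed

lemma prob_Gnp_mono:
  assumes "0 \<le> p" "p \<le> 1" and "\<And>E. E \<subseteq> all_edges n \<Longrightarrow> Q E \<Longrightarrow> Q' E"
  shows "prob_Gnp n p Q \<le> prob_Gnp n p Q'"
  unfolding prob_Gnp_def using assms by (intro sum_mono) auto

lemma prob_Gnp_union_bound:
  assumes "0 \<le> p" "p \<le> 1" and "finite I"
  shows "prob_Gnp n p (\<lambda>E. \<exists>i\<in>I. Q i E) \<le> (\<Sum>i\<in>I. prob_Gnp n p (Q i))"
proof -
  let ?w = "\<lambda>E. p ^ card E * (1 - p) ^ (card (all_edges n) - card E)"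
  have "(if \<exists>i\<in>I. Q i E then ?w E else 0) \<le> (\<Sum>i\<in>I. if Q i E then ?w E else 0)" for E
  proof (cases "\<exists>i\<in>I. Q i E")
    case True
    then obtain i where "i \<in> I" "Q i E" by blast
    then have "?w E \<le> (\<Sum>i\<in>I. if Q i E then ?w E else 0)"
      using member_le_sum[of i I "\<lambda>i. if Q i E then ?w E else 0"] assms by auto
    then show ?thesis using True by simp
  qed (use assms in \<open>simp add: sum_nonneg\<close>)
  then have "prob_Gnp n p (\<lambda>E. \<exists>i\<in>I. Q i E)
      \<le> (\<Sum>E\<in>Pow (all_edges n). \<Sum>i\<in>I. if Q i E then ?w E else 0)"
    unfolding prob_Gnp_def by (intro sum_mono)
  also have "\<dots> = (\<Sum>i\<in>I. prob_Gnp n p (Q i))"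
    unfolding prob_Gnp_def by (rule sum.swap)
  finally show ?thesis .
qed

lemma prob_Gnp_subset_edges_ge:
  fixes p :: real
  assumes p: "0 \<le> p" "p \<le> 1" and S: "S \<subseteq> all_edges n"
  shows "1 - card S * (1 - p) \<le> prob_Gnp n p (\<lambda>E. S \<subseteq> E)"
proof -
  have fin: "finite S" using S finite_all_edges finite_subset by blast
  have "prob_Gnp n p (\<lambda>E. \<not> S \<subseteq> E) \<le> prob_Gnp n p (\<lambda>E. \<exists>e\<in>S. {e} \<inter> E = {})"
    by (rule prob_Gnp_mono[OF p]) auto
  also have "\<dots> \<le> (\<Sum>e\<in>S. prob_Gnp n p (\<lambda>E. {e} \<inter> E = {}))"
    by (rule prob_Gnp_union_bound[OF p fin])
  also have "\<dots> = (\<Sum>e\<in>S. 1 - p)"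
  proof (rule sum.cong)
    fix e assume "e \<in> S"
    then show "prob_Gnp n p (\<lambda>E. {e} \<inter> E = {}) = 1 - p"
      using prob_Gnp_no_edge_of[of "{e}" n p] S by auto
  qed simp
  finally show ?thesis by (simp add: prob_Gnp_compl)
qed

lemma prob_Gnp_not_at_most_one_non_neighbour_le:
  fixes p :: real
  assumes p: "0 \<le> p" "p \<le> 1"
  shows "prob_Gnp n p (\<lambda>E. \<not> at_most_one_non_neighbour {0..<n} E) \<le> real n ^ 3 * (1 - p) ^ 2"
proof -
  let ?I = "{..<n} \<times> {..<n} \<times> {..<n}"
  define Q :: "nat \<times> nat \<times> nat \<Rightarrow> nat set set \<Rightarrow> bool"
    where "Q = (\<lambda>(v, x, y) E. v \<noteq> x \<and> v \<noteq> y \<and> x \<noteq> y \<and> {{v, x}, {v, y}} \<inter> E = {})"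
  have "prob_Gnp n p (\<lambda>E. \<not> at_most_one_non_neighbour {0..<n} E) \<le> prob_Gnp n p (\<lambda>E. \<exists>i\<in>?I. Q i E)"
  proof (rule prob_Gnp_mono[OF p])
    fix E assume "\<not> at_most_one_non_neighbour {0..<n} E"
    then obtain v x y where "v < n" "x < n" "y < n" "v \<noteq> x" "v \<noteq> y" "x \<noteq> y" "{v, x} \<notin> E" "{v, y} \<notin> E"
      unfolding at_most_one_non_neighbour_def by auto
    then show "\<exists>i\<in>?I. Q i E" by (intro bexI[of _ "(v, x, y)"]) (auto simp: Q_def)
  qed
  also have "\<dots> \<le> (\<Sum>i\<in>?I. prob_Gnp n p (Q i))"
    by (rule prob_Gnp_union_bound[OF p]) simp
  also have "\<dots> \<le> (\<Sum>i\<in>?I. (1 - p) ^ 2)"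
  proof (rule sum_mono)
    fix i assume "i \<in> ?I"
    then obtain v x y where i: "i = (v, x, y)" "v < n" "x < n" "y < n" by auto
    show "prob_Gnp n p (Q i) \<le> (1 - p) ^ 2"
    proof (cases "v \<noteq> x \<and> v \<noteq> y \<and> x \<noteq> y")
      case True
      have "{{v, x}, {v, y}} \<subseteq> all_edges n" using True i by (auto simp: all_edges_def)
      moreover have "card {{v, x}, {v, y}} = 2" using True by (simp add: doubleton_eq_iff)
      ultimately show ?thesis
        using prob_Gnp_no_edge_of[of "{{v, x}, {v, y}}" n p] True by (simp add: Q_def i)
    next
      case False
      then have "prob_Gnp n p (Q i) = 0" by (auto simp: prob_Gnp_def Q_def i)
      then show ?thesis by simp
    qed
  qed
  also have "\<dots> = real n ^ 3 * (1 - p) ^ 2" by (simp add: card_cartesian_product power3_eq_cube)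
  finally show ?thesis .
qed

text \<open>Four vertices of the unit cube, no two of them adjacent in the cube: a regular tetrahedron
  with edge length \<open>sqrt 2\<close>.\<close>

definition tetrahedron :: "nat \<Rightarrow> real^3" where
  "tetrahedron i = (if i = 0 then vector [1, 0, 0] else if i = 1 then vector [0, 1, 0]
                    else if i = 2 then vector [0, 0, 1] else vector [1, 1, 1])"

lemma dist_tetrahedron: "x < 4 \<Longrightarrow> y < 4 \<Longrightarrow> x \<noteq> y \<Longrightarrow> dist (tetrahedron x) (tetrahedron y) = sqrt 2"
  by (simp add: dist_norm norm_eq_sqrt_inner inner_vec_def sum_3 tetrahedron_def)

lemma inj_on_tetrahedron: "inj_on tetrahedron {..<4}"
  by (rule inj_onI) (metis dist_tetrahedron dist_self lessThan_iff real_sqrt_eq_zero_cancel_iff zero_neq_numeral)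

lemma diameter_tetrahedron: "diameter (tetrahedron ` {..<4}) = sqrt 2"
proof (rule antisym)
  show "diameter (tetrahedron ` {..<4}) \<le> sqrt 2"
  proof (rule diameter_le)
    fix u v assume "u \<in> tetrahedron ` {..<4}" "v \<in> tetrahedron ` {..<4}"
    then obtain x y where "x < 4" "y < 4" "u = tetrahedron x" "v = tetrahedron y" by auto
    then show "norm (u - v) \<le> sqrt 2"
      using dist_tetrahedron[of x y] by (cases "x = y") (auto simp: dist_norm)
  qed simp
  have "dist (tetrahedron 0) (tetrahedron 1) \<le> diameter (tetrahedron ` {..<4})"
    by (rule diameter_bounded_bound) auto
  then show "sqrt 2 \<le> diameter (tetrahedron ` {..<4})" using dist_tetrahedron[of 0 1] by simp
qed

lemma diam_event_of_K4:
  assumes "4 \<le> n" and "all_edges 4 \<subseteq> E"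
  shows "diam_event TYPE(real^3) conn n 4 E"
proof -
  have complete: "\<And>x y. x \<in> {..<4} \<Longrightarrow> y \<in> {..<4} \<Longrightarrow> x \<noteq> y \<Longrightarrow> {x, y} \<in> E"
    using assms(2) by (auto simp: all_edges_def)
  have "is_diameter_graph TYPE(real^3) {..<4} E"
    unfolding is_diameter_graph_def
    using inj_on_tetrahedron diameter_tetrahedron dist_tetrahedron complete
    by (intro exI[of _ tetrahedron]) auto
  moreover have "chromatic_number {..<4} E = DIM(real^3) + 1"
    using chromatic_number_complete[of "{..<4}" E] complete by simp
  ultimately show ?thesis
    unfolding diam_event_def using assms(1) connected_induced_complete[OF complete]
    by (intro exI[of _ "{..<4}"]) auto
qed

lemma prob_Gnp_diam_event_4:
  fixes p :: real
  assumes p: "0 \<le> p" "p \<le> 1" and "4 \<le> n"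
  shows "1 - 16 * (1 - p) \<le> prob_Gnp n p (diam_event TYPE(real^3) conn n 4)"
proof -
  have sub: "all_edges 4 \<subseteq> all_edges n" using \<open>4 \<le> n\<close> by (rule all_edges_mono)
  have "card (all_edges 4) \<le> card (Pow {0..<4::nat})"
    by (rule card_mono) (auto simp: all_edges_def)
  then have "1 - 16 * (1 - p) \<le> 1 - card (all_edges 4) * (1 - p)"
    using p by (intro diff_left_mono mult_right_mono) (auto simp: card_Pow)
  also have "\<dots> \<le> prob_Gnp n p (\<lambda>E. all_edges 4 \<subseteq> E)"
    by (rule prob_Gnp_subset_edges_ge[OF p sub])
  also have "\<dots> \<le> prob_Gnp n p (diam_event TYPE(real^3) conn n 4)"
    by (rule prob_Gnp_mono[OF p]) (rule diam_event_of_K4[OF \<open>4 \<le> n\<close>])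
  finally show ?thesis .
qed

lemma diam_event_imp_two_non_neighbours:
  assumes "5 \<le> k" and "diam_event TYPE(real^3) conn n k E"
  shows "\<not> at_most_one_non_neighbour {0..<n} E"
proof
  assume amn: "at_most_one_non_neighbour {0..<n} E"
  obtain W where W: "W \<subseteq> {0..<n}" "card W = k" "is_diameter_graph TYPE(real^3) W E"
    "chromatic_number W E = 4"
    using assms(2) unfolding diam_event_def by auto
  then have "finite W" using finite_subset by blast
  with W assms(1) have "\<not> at_most_one_non_neighbour W E"
    by (intro diameter_graph_3_two_non_neighbours) auto
  with amn W(1) show False using at_most_one_non_neighbour_subset by blast
qed

lemma u_gen_eq_4:
  fixes p :: real
  assumes p: "0 \<le> p" "p \<le> 1" and "4 \<le> n"
    and small: "16 * (1 - p) < 1/2" "real n ^ 3 * (1 - p) ^ 2 < 1/2"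
  shows "u_gen TYPE(real^3) conn n p = 4"
proof -
  let ?K = "{k. 0 < k \<and> 1/2 < prob_Gnp n p (diam_event TYPE(real^3) conn n k)}"
  have "4 \<in> ?K" using prob_Gnp_diam_event_4[OF p \<open>4 \<le> n\<close>, of conn] small(1) by simp
  moreover have "k \<le> 4" if "k \<in> ?K" for k
  proof (rule ccontr)
    assume "\<not> k \<le> 4"
    then have "prob_Gnp n p (diam_event TYPE(real^3) conn n k)
        \<le> prob_Gnp n p (\<lambda>E. \<not> at_most_one_non_neighbour {0..<n} E)"
      by (intro prob_Gnp_mono[OF p] diam_event_imp_two_non_neighbours) auto
    with that prob_Gnp_not_at_most_one_non_neighbour_le[OF p, of n] small(2) show False by simp
  qed
  ultimately show ?thesis
    unfolding u_gen_def by (intro Max_eqI) (auto intro: finite_subset[of _ "{..4}"])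
qed

lemma eventually_le_of_smallo_powr:
  fixes q :: "nat \<Rightarrow> real"
  assumes nonneg: "\<And>n. 0 \<le> q n" and "q \<in> o(\<lambda>n. 1 / real n powr 1.5)" and "0 < c"
  shows "\<forall>\<^sub>F n in sequentially. q n \<le> c \<and> real n ^ 3 * q n ^ 2 \<le> c ^ 2"
proof -
  have "\<forall>\<^sub>F n in sequentially. norm (q n) \<le> c * norm (1 / real n powr 1.5)"
    by (rule landau_o.smallD[OF assms(2) \<open>0 < c\<close>])
  then show ?thesis
    using eventually_ge_at_top[of "1 :: nat"]
  proof eventually_elim
    case (elim n)
    define m where "m = real n powr 1.5"
    have m: "1 \<le> m" using elim(2) by (simp add: m_def ge_one_powr_ge_zero)
    have "q n \<le> c * (1 / m)" using elim(1) nonneg[of n] m by (simp add: m_def)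
    then have scaled: "q n * m \<le> c" using mult_right_mono[of _ _ m] m by fastforce
    have "q n \<le> q n * m" using mult_left_mono[of 1 m "q n"] m nonneg[of n] by simp
    have "real n ^ 3 = m ^ 2"
      using elim(2) by (simp add: m_def power2_eq_square flip: powr_add)
    then have "real n ^ 3 * q n ^ 2 = (q n * m) ^ 2" by (simp add: power_mult_distrib)
    also have "\<dots> \<le> c ^ 2"
      using scaled nonneg[of n] m by (intro power_mono) auto
    finally show ?case using \<open>q n \<le> q n * m\<close> scaled by simp
  qed
qed

theorem theorem20:
  fixes p :: "nat \<Rightarrow> real"
  assumes "\<forall>n. 0 \<le> p n \<and> p n \<le> 1"
    and "(\<lambda>n. 1 - p n) \<in> o(\<lambda>n. 1 / real n powr 1.5)"
  shows "\<forall>\<^sub>F n in sequentially.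
           u_d TYPE(real^3) n (p n) = 4 \<and> u_d' TYPE(real^3) n (p n) = 4"
proof -
  have "\<forall>\<^sub>F n in sequentially. 1 - p n \<le> 1/64 \<and> real n ^ 3 * (1 - p n) ^ 2 \<le> (1/64) ^ 2"
    by (rule eventually_le_of_smallo_powr) (use assms in auto)
  then show ?thesis
    using eventually_ge_at_top[of 4]
  proof eventually_elim
    case (elim n)
    then show ?case
      using u_gen_eq_4[of "p n" n] assms(1) unfolding u_d_def u_d'_def by (auto simp: power2_eq_square)
  qed
qed

end
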